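(* Let $\Gamma$ be an elliptic graph with NN-elliptic sequence $\{B_j\}$ and cycles $C_j$. For any $-1\le j\le m-1$ and any $\ell\in Supp_j(P_0)$ one has $\ell_v\ge0$ for all $v\in\mathcal V(B_{j+1})$ and $\ell_v<0$ for all $v\in\mathcal V(\Gamma)\setminus\mathcal V(B_{j+1})$.
   Context: Let $\Gamma$ be a finite connected tree with vertex set $\mathcal V$, each vertex $v$ decorated by an integer $e_v$ (genera zero). $L=\mathbb Z\langle E_v\rangle$ with form $(E_v,E_v)=e_v$, $(E_v,E_w)=1$ for adjacent $v\ne w$, $0$ otherwise, assumed negative definite; $L'$ the dual lattice, $[l']$ the class in $L'/L$; $E_v^*$ with $(E_v^*,E_w)=-\delta_{vw}$; $\delta_v$ valency; $E=\sum E_v$; $\ge$ coordinatewise, $\prec$ strict in all coordinates, $l>0$ if $l\ge0,l\ne0$; $|l'|$ the support. $Z_K$ with $(Z_K,E_v)=e_v+2$; $\chi(l')=-(l',l'-Z_K)/2$. $\mathcal S'=\{l':(l',E_v)\le0\ \forall v\}$, $s_h=\min\{l'\in\mathcal S':[l']=h\}$; $Z_{min}(B)$ the minimal nonzero element of $\mathcal S'(B)\cap L(B)$. $Z(\mathbf t)=\sum z(l')\mathbf t^{l'}$ the Taylor expansion at $0$ of $\prod_v(1-\mathbf t^{E_v^*})^{\delta_v-2}$; $P_0(\mathbf t)=\sum_{\ell\in L,\ell\not\prec0}w(\ell)\mathbf t^\ell$, $w(\ell)=z(Z_K-E-\ell)$, $Supp(P_0)=\{\ell\not\prec0:w(\ell)\ne0\}$.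 Elliptic graph: $e_v\le-2$ for all $v$, $\min_{l\in L,l>0}\chi(l)=0$. NN-elliptic sequence: $B_{-1}=\Gamma$, $Z_{B_{-1}}=s_{[Z_K]}$, $B_0=|Z_K-s_{[Z_K]}|$; for $j\ge0$, $Z_{B_j}=Z_{min}(B_j)$, and if $Z_K-\sum_{i=-1}^jZ_{B_i}\ne0$ then $B_{j+1}=|Z_K-\sum_{i=-1}^jZ_{B_i}|$; $m$ is the index with $Z_K=\sum_{i=-1}^mZ_{B_i}$; $C_j=\sum_{i=-1}^jZ_{B_i}$. For $\ell\in Supp(P_0)$ with $\mathcal V^{<0}(\ell)=\{v:\ell_v<0\}$, the associated cycle is the unique $l'$ with $\ell=Z_K-E-l'-\sum_{v\in\mathcal V^{<0}(\ell)}m_vE_v$, $l'\le Z_K$, $l'_v=(Z_K)_v$ on $\mathcal V^{<0}(\ell)$, $m_v\in\mathbb Z_{\ge0}$; $Supp_j(P_0)$ is the set of $\ell$ with associated cycle $C_j$. *)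

theory Defs
  imports Complex_Main "HOL-Library.Function_Algebras"
begin

text \<open>Plumbing graphs: a finite vertex set V, an adjacency relation adj, decorations e.
  Cycles (elements of L, L' and L tensor Q) are represented by their coefficient
  functions 'a => rat with respect to the basis E_v, vanishing outside V.\<close>

definition is_tree :: "'a set \<Rightarrow> ('a \<Rightarrow> 'a \<Rightarrow> bool) \<Rightarrow> bool" where
  "is_tree V adj \<longleftrightarrow> finite V \<and> V \<noteq> {} \<and>
     (\<forall>v w. adj v w \<longrightarrow> v \<in> V \<and> w \<in> V \<and> v \<noteq> w \<and> adj w v) \<and>
     (\<forall>v\<in>V. \<forall>w\<in>V. adj\<^sup>*\<^sup>* v w) \<and>
     card {(v, w). adj v w} = 2 * (card V - 1)"

definition form :: "('a \<Rightarrow> 'a \<Rightarrow> bool) \<Rightarrow> ('a \<Rightarrow> int) \<Rightarrow> 'a \<Rightarrow> 'a \<Rightarrow> int" where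
  "form adj e v w = (if v = w then e v else if adj v w then 1 else 0)"

definition pair :: "'a set \<Rightarrow> ('a \<Rightarrow> 'a \<Rightarrow> bool) \<Rightarrow> ('a \<Rightarrow> int) \<Rightarrow> ('a \<Rightarrow> rat) \<Rightarrow> ('a \<Rightarrow> rat) \<Rightarrow> rat" where
  "pair V adj e x y = (\<Sum>v\<in>V. \<Sum>w\<in>V. x v * y w * of_int (form adj e v w))"

definition Ev :: "'a \<Rightarrow> 'a \<Rightarrow> rat" where
  "Ev v = (\<lambda>w. if w = v then 1 else 0)"

definition Etot :: "'a set \<Rightarrow> 'a \<Rightarrow> rat" where
  "Etot V = (\<lambda>w. if w \<in> V then 1 else 0)"

definition cyc :: "'a set \<Rightarrow> ('a \<Rightarrow> rat) \<Rightarrow> bool" where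
  "cyc V x \<longleftrightarrow> (\<forall>v. v \<notin> V \<longrightarrow> x v = 0)"

definition integral :: "('a \<Rightarrow> rat) \<Rightarrow> bool" where
  "integral x \<longleftrightarrow> (\<forall>v. x v \<in> \<int>)"

definition Lat :: "'a set \<Rightarrow> ('a \<Rightarrow> rat) set" where
  "Lat V = {x. cyc V x \<and> integral x}"

definition Ldual :: "'a set \<Rightarrow> ('a \<Rightarrow> 'a \<Rightarrow> bool) \<Rightarrow> ('a \<Rightarrow> int) \<Rightarrow> ('a \<Rightarrow> rat) set" where
  "Ldual V adj e = {x. cyc V x \<and> (\<forall>w\<in>V. pair V adj e x (Ev w) \<in> \<int>)}"

definition neg_definite :: "'a set \<Rightarrow> ('a \<Rightarrow> 'a \<Rightarrow> bool) \<Rightarrow> ('a \<Rightarrow> int) \<Rightarrow> bool" where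
  "neg_definite V adj e \<longleftrightarrow> (\<forall>l\<in>Lat V. l \<noteq> 0 \<longrightarrow> pair V adj e l l < 0)"

definition Estar :: "'a set \<Rightarrow> ('a \<Rightarrow> 'a \<Rightarrow> bool) \<Rightarrow> ('a \<Rightarrow> int) \<Rightarrow> 'a \<Rightarrow> 'a \<Rightarrow> rat" where
  "Estar V adj e v = (THE x. cyc V x \<and>
      (\<forall>w\<in>V. pair V adj e x (Ev w) = (if v = w then -1 else 0)))"

definition ZK :: "'a set \<Rightarrow> ('a \<Rightarrow> 'a \<Rightarrow> bool) \<Rightarrow> ('a \<Rightarrow> int) \<Rightarrow> 'a \<Rightarrow> rat" where
  "ZK V adj e = (THE x. cyc V x \<and> (\<forall>v\<in>V. pair V adj e x (Ev v) = of_int (e v + 2)))"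

definition chi :: "'a set \<Rightarrow> ('a \<Rightarrow> 'a \<Rightarrow> bool) \<Rightarrow> ('a \<Rightarrow> int) \<Rightarrow> ('a \<Rightarrow> rat) \<Rightarrow> rat" where
  "chi V adj e l = - pair V adj e l (l - ZK V adj e) / 2"

definition elliptic :: "'a set \<Rightarrow> ('a \<Rightarrow> 'a \<Rightarrow> bool) \<Rightarrow> ('a \<Rightarrow> int) \<Rightarrow> bool" where
  "elliptic V adj e \<longleftrightarrow> (\<forall>v\<in>V. e v \<le> -2) \<and>
     (\<forall>l\<in>Lat V. 0 \<le> l \<and> l \<noteq> 0 \<longrightarrow> 0 \<le> chi V adj e l) \<and>
     (\<exists>l\<in>Lat V. 0 \<le> l \<and> l \<noteq> 0 \<and> chi V adj e l = 0)"

definition minimum_of :: "('a \<Rightarrow> rat) set \<Rightarrow> 'a \<Rightarrow> rat" where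
  "minimum_of A = (THE x. x \<in> A \<and> (\<forall>y\<in>A. x \<le> y))"

definition Sprime :: "'a set \<Rightarrow> ('a \<Rightarrow> 'a \<Rightarrow> bool) \<Rightarrow> ('a \<Rightarrow> int) \<Rightarrow> ('a \<Rightarrow> rat) set" where
  "Sprime V adj e = {x \<in> Ldual V adj e. \<forall>v\<in>V. pair V adj e x (Ev v) \<le> 0}"

definition s_class :: "'a set \<Rightarrow> ('a \<Rightarrow> 'a \<Rightarrow> bool) \<Rightarrow> ('a \<Rightarrow> int) \<Rightarrow> ('a \<Rightarrow> rat) \<Rightarrow> 'a \<Rightarrow> rat" where
  "s_class V adj e l' = minimum_of {x \<in> Sprime V adj e. x - l' \<in> Lat V}"

text \<open>Z_min(B) for a (full) subgraph with vertex set B: minimal nonzero element of S'(B) \<inter> L(B).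
  For l supported on B the pairing with E_v (v in B) in B agrees with that in Gamma.\<close>
definition Zmin :: "'a set \<Rightarrow> ('a \<Rightarrow> 'a \<Rightarrow> bool) \<Rightarrow> ('a \<Rightarrow> int) \<Rightarrow> 'a set \<Rightarrow> 'a \<Rightarrow> rat" where
  "Zmin V adj e B = minimum_of
     {l \<in> Lat B. l \<noteq> 0 \<and> (\<forall>v\<in>B. pair V adj e l (Ev v) \<le> 0)}"

definition supp :: "'a set \<Rightarrow> ('a \<Rightarrow> rat) \<Rightarrow> 'a set" where
  "supp V x = {v \<in> V. x v \<noteq> 0}"

text \<open>Cseq n = C_(n-1) of the NN-elliptic sequence, so Cseq 0 = C_(-1) = s_[Z_K],
  and B_(n) = supp (Z_K - Cseq n), Cseq (Suc n) = Cseq n + Z_min(B_n).\<close>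
fun Cseq :: "'a set \<Rightarrow> ('a \<Rightarrow> 'a \<Rightarrow> bool) \<Rightarrow> ('a \<Rightarrow> int) \<Rightarrow> nat \<Rightarrow> 'a \<Rightarrow> rat" where
  "Cseq V adj e 0 = s_class V adj e (ZK V adj e)"
| "Cseq V adj e (Suc n) = Cseq V adj e n
     + Zmin V adj e (supp V (ZK V adj e - Cseq V adj e n))"

definition valency :: "'a set \<Rightarrow> ('a \<Rightarrow> 'a \<Rightarrow> bool) \<Rightarrow> 'a \<Rightarrow> nat" where
  "valency V adj v = card {w\<in>V. adj v w}"

text \<open>Coefficient of x^k in (1 - x)^n, n an integer.\<close>
definition bincoef :: "int \<Rightarrow> nat \<Rightarrow> rat" where
  "bincoef n k = (-1) ^ k * (of_int n gchoose k)"

text \<open>Taylor coefficient z(l') of prod_v (1 - t^(E_v^* ))^(delta_v - 2): the sum over all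
  exponent tuples (k_v) with sum_v k_v E_v^* = l' of the product of the coefficients.\<close>
definition zcoef :: "'a set \<Rightarrow> ('a \<Rightarrow> 'a \<Rightarrow> bool) \<Rightarrow> ('a \<Rightarrow> int) \<Rightarrow> ('a \<Rightarrow> rat) \<Rightarrow> rat" where
  "zcoef V adj e l' =
     (\<Sum>k\<in>{k :: 'a \<Rightarrow> nat. (\<forall>v. v \<notin> V \<longrightarrow> k v = 0) \<and>
            (\<lambda>w. \<Sum>v\<in>V. of_nat (k v) * Estar V adj e v w) = l'}.
        \<Prod>v\<in>V. bincoef (int (valency V adj v) - 2) (k v))"

definition wP0 :: "'a set \<Rightarrow> ('a \<Rightarrow> 'a \<Rightarrow> bool) \<Rightarrow> ('a \<Rightarrow> int) \<Rightarrow> ('a \<Rightarrow> rat) \<Rightarrow> rat" where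
  "wP0 V adj e l = zcoef V adj e (ZK V adj e - Etot V - l)"

definition SuppP0 :: "'a set \<Rightarrow> ('a \<Rightarrow> 'a \<Rightarrow> bool) \<Rightarrow> ('a \<Rightarrow> int) \<Rightarrow> ('a \<Rightarrow> rat) set" where
  "SuppP0 V adj e = {l \<in> Lat V. \<not> (\<forall>v\<in>V. l v < 0) \<and> wP0 V adj e l \<noteq> 0}"

definition Vneg :: "'a set \<Rightarrow> ('a \<Rightarrow> rat) \<Rightarrow> 'a set" where
  "Vneg V l = {v \<in> V. l v < 0}"

definition assoc_cycle :: "'a set \<Rightarrow> ('a \<Rightarrow> 'a \<Rightarrow> bool) \<Rightarrow> ('a \<Rightarrow> int) \<Rightarrow> ('a \<Rightarrow> rat) \<Rightarrow> 'a \<Rightarrow> rat" where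
  "assoc_cycle V adj e l = (THE l'. cyc V l' \<and> l' \<le> ZK V adj e \<and>
      (\<forall>v\<in>Vneg V l. l' v = ZK V adj e v) \<and>
      (\<exists>m :: 'a \<Rightarrow> nat. l = ZK V adj e - Etot V - l'
          - (\<lambda>w. if w \<in> Vneg V l then of_nat (m w) else 0)))"

end

theory Submission
  imports Defs "Jordan_Normal_Form.Determinant"
begin

text \<open>Away from the negative part of l, the defining relation of the associated cycle l' reads
  l = Z_K - E - l', so Z_K - l' is 1 + l_v > 0 there, while l' = Z_K on the negative part.
  Hence the support of Z_K - C_j, i.e. B_(j+1), is exactly the set where l is nonnegative.
  The only input beyond unfolding definitions is that Z_K is a genuine cycle on the graph,
  which holds because negative definiteness makes the intersection matrix nonsingular.\<close>

lemma pair_Ev: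
  assumes "finite V" "w \<in> V"
  shows "pair V adj e x (Ev w) = (\<Sum>v\<in>V. x v * of_int (form adj e v w))"
  unfolding pair_def Ev_def using assms
  by (simp add: if_distrib[where f = "\<lambda>c. _ * c * _"] sum.delta' cong: if_cong)

lemma pair_self:
  assumes "finite V"
  shows "pair V adj e x x = (\<Sum>w\<in>V. x w * pair V adj e x (Ev w))"
proof -
  have "(\<Sum>w\<in>V. x w * pair V adj e x (Ev w)) =
        (\<Sum>w\<in>V. \<Sum>v\<in>V. x v * x w * of_int (form adj e v w))"
    using assms by (simp add: pair_Ev sum_distrib_left algebra_simps)
  also have "\<dots> = pair V adj e x x" unfolding pair_def by (rule sum.swap)
  finally show ?thesis by simp
qed

lemma pair_scale:
  "pair V adj e (\<lambda>w. c * x w) (\<lambda>w. c * x w) = c * c * pair V adj e x x"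
  unfolding pair_def by (simp add: sum_distrib_left algebra_simps)

lemma pair_diff_left:
  "pair V adj e (x - y) z = pair V adj e x z - pair V adj e y z"
  unfolding pair_def by (simp add: sum_subtractf algebra_simps)

lemma cyc_common_denominator:
  assumes "finite V" and "cyc V x"
  obtains D :: rat where "D \<noteq> 0" and "(\<lambda>w. D * x w) \<in> Lat V"
proof
  define den where "den v = snd (quotient_of (x v))" for v
  define D :: rat where "D = of_int (\<Prod>v\<in>V. den v)"
  have "(\<Prod>v\<in>V. den v) > 0" unfolding den_def by (intro prod_pos) (simp add: quotient_of_denom_pos')
  thus "D \<noteq> 0" unfolding D_def by (simp del: of_int_prod)
  have "D * x w \<in> \<int>" if "w \<in> V" for w
  proof -
    obtain a b where q: "quotient_of (x w) = (a, b)" by (cases "quotient_of (x w)")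
    have "D = of_int b * of_int (\<Prod>v\<in>V - {w}. den v)"
      unfolding D_def using prod.remove[OF assms(1) that, of den] q by (simp add: den_def)
    moreover have "of_int b * x w = of_int a"
      using quotient_of_div[OF q] quotient_of_denom_pos[OF q] by simp
    ultimately have "D * x w = of_int (a * (\<Prod>v\<in>V - {w}. den v))"
      by (simp add: algebra_simps)
    thus ?thesis by (metis Ints_of_int)
  qed
  moreover have "D * x w \<in> \<int>" if "w \<notin> V" for w
    using assms(2) that by (simp add: cyc_def)
  ultimately have "\<forall>w. D * x w \<in> \<int>" by blast
  moreover have "cyc V (\<lambda>w. D * x w)" using assms(2) by (simp add: cyc_def)
  ultimately show "(\<lambda>w. D * x w) \<in> Lat V" unfolding Lat_def integral_def by simp
qed

lemma neg_definite_orthogonal_imp_zero: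
  assumes fin: "finite V" and nd: "neg_definite V adj e" and "cyc V x"
    and orth: "\<forall>w\<in>V. pair V adj e x (Ev w) = 0"
  shows "x = 0"
proof -
  obtain D where D: "D \<noteq> 0" and DxL: "(\<lambda>w. D * x w) \<in> Lat V"
    using cyc_common_denominator[OF fin \<open>cyc V x\<close>] .
  have "pair V adj e (\<lambda>w. D * x w) (\<lambda>w. D * x w) = 0"
    using pair_self[OF fin] orth by (simp add: pair_scale)
  hence "(\<lambda>w. D * x w) = 0" using nd DxL unfolding neg_definite_def by force
  thus ?thesis using D by (simp add: fun_eq_iff)
qed

lemma mat_vec_solvable_if_kernel_trivial:
  fixes A :: "'a :: field mat"
  assumes A: "A \<in> carrier_mat n n"
    and ker: "\<And>v. v \<in> carrier_vec n \<Longrightarrow> A *\<^sub>v v = 0\<^sub>v n \<Longrightarrow> v = 0\<^sub>v n"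
    and b: "b \<in> carrier_vec n"
  obtains u where "u \<in> carrier_vec n" and "A *\<^sub>v u = b"
proof -
  have "det A \<noteq> 0" using det_0_iff_vec_prod_zero_field[OF A] ker by blast
  from det_non_zero_imp_unit[OF A this, of "()"]
  obtain B where B: "B \<in> carrier_mat n n" and AB: "A * B = 1\<^sub>m n"
    unfolding Units_def ring_mat_def by auto
  show ?thesis
  proof (rule that)
    show "B *\<^sub>v b \<in> carrier_vec n" using B b by simp
    show "A *\<^sub>v (B *\<^sub>v b) = b" using A B b by (simp add: AB flip: assoc_mult_mat_vec)
  qed
qed

lemma cyc_with_prescribed_pairings:
  assumes fin: "finite V" and nd: "neg_definite V adj e"
  shows "\<exists>x. cyc V x \<and> (\<forall>w\<in>V. pair V adj e x (Ev w) = b w)"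
proof -
  define n where "n = card V"
  obtain f where f: "bij_betw f {0..<n} V"
    using ex_bij_betw_nat_finite[OF fin] unfolding n_def by blast
  define idx where "idx = the_inv_into {0..<n} f"
  define F where "F u = (\<lambda>w. if w \<in> V then u $ idx w else 0)" for u :: "rat vec"
  have F_f: "F u (f i) = u $ i" if "i < n" for u i
    using that f the_inv_into_f_f[OF bij_betw_imp_inj_on[OF f]]
    unfolding F_def idx_def by (auto simp: bij_betw_def)
  have F_cyc: "cyc V (F u)" for u unfolding cyc_def F_def by simp
  have sum_V: "(\<Sum>v\<in>V. g v) = (\<Sum>i<n. g (f i))" for g :: "'a \<Rightarrow> rat"
    using sum.reindex_bij_betw[OF f, of g] by (simp add: atLeast0LessThan)
  define A :: "rat mat" where "A = mat n n (\<lambda>(j, i). of_int (form adj e (f i) (f j)))"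
  have A: "A \<in> carrier_mat n n" unfolding A_def by simp
  have pair_F: "pair V adj e (F u) (Ev (f j)) = (A *\<^sub>v u) $ j"
    if "j < n" "u \<in> carrier_vec n" for u j
  proof -
    have "f j \<in> V" using f that(1) by (auto simp: bij_betw_def)
    hence "pair V adj e (F u) (Ev (f j)) = (\<Sum>i<n. u $ i * of_int (form adj e (f i) (f j)))"
      by (simp add: pair_Ev[OF fin] sum_V F_f)
    also have "\<dots> = (A *\<^sub>v u) $ j"
      using that unfolding A_def by (auto simp: scalar_prod_def atLeast0LessThan intro!: sum.cong)
    finally show ?thesis .
  qed
  have V_img: "V = f ` {0..<n}" using f by (simp add: bij_betw_def)
  have ker: "v = 0\<^sub>v n" if v: "v \<in> carrier_vec n" and Av: "A *\<^sub>v v = 0\<^sub>v n" for v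
  proof -
    have "\<forall>w\<in>V. pair V adj e (F v) (Ev w) = 0"
      using pair_F[OF _ v] Av V_img by auto
    hence "F v = 0" using neg_definite_orthogonal_imp_zero[OF fin nd F_cyc] by blast
    hence "v $ i = 0" if "i < n" for i using F_f[OF that, of v] by (simp add: fun_eq_iff)
    thus ?thesis using v by (intro eq_vecI) simp_all
  qed
  obtain u where u: "u \<in> carrier_vec n" and Au: "A *\<^sub>v u = vec n (\<lambda>j. b (f j))"
    by (rule mat_vec_solvable_if_kernel_trivial[OF A ker]) auto
  have "\<forall>w\<in>V. pair V adj e (F u) (Ev w) = b w"
    using pair_F[OF _ u] Au V_img by auto
  with F_cyc show ?thesis by blast
qed

lemma ZK_cyc:
  assumes fin: "finite V" and nd: "neg_definite V adj e"
  shows "cyc V (ZK V adj e)"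
proof -
  let ?P = "\<lambda>x. cyc V x \<and> (\<forall>v\<in>V. pair V adj e x (Ev v) = of_int (e v + 2))"
  have "x = y" if "?P x" "?P y" for x y
  proof -
    have "cyc V (x - y)" using that unfolding cyc_def by simp
    moreover have "\<forall>w\<in>V. pair V adj e (x - y) (Ev w) = 0"
      using that by (simp add: pair_diff_left)
    ultimately have "x - y = 0" by (rule neg_definite_orthogonal_imp_zero[OF fin nd])
    thus "x = y" by simp
  qed
  with cyc_with_prescribed_pairings[OF fin nd, of "\<lambda>v. of_int (e v + 2)"] have "\<exists>!x. ?P x" by blast
  from theI'[OF this] show ?thesis unfolding ZK_def by blast
qed

lemma assoc_cycle_eq:
  assumes l: "l \<in> Lat V" and cZ: "cyc V (ZK V adj e)"
  shows "assoc_cycle V adj e l =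
    (\<lambda>w. if w \<in> V then if l w < 0 then ZK V adj e w else ZK V adj e w - 1 - l w else 0)"
    (is "_ = ?l'")
proof -
  let ?Z = "ZK V adj e"
  let ?mult = "\<lambda>m :: 'a \<Rightarrow> nat. \<lambda>w. if w \<in> Vneg V l then of_nat (m w) else (0 :: rat)"
  let ?P = "\<lambda>y. cyc V y \<and> y \<le> ?Z \<and> (\<forall>v\<in>Vneg V l. y v = ?Z v) \<and>
      (\<exists>m. l = ?Z - Etot V - y - ?mult m)"
  have cl: "cyc V l" and il: "\<And>w. l w \<in> \<int>"
    using l unfolding Lat_def integral_def by auto
  \<comment> \<open>integrality of l makes the multiplicity -1 - l_v on the negative part a natural number\<close>
  have pointwise: "l w = ?Z w - Etot V w - ?l' w - ?mult (\<lambda>w. nat (- 1 - \<lfloor>l w\<rfloor>)) w" for w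
  proof (cases "w \<in> V")
    case True
    from il[of w] obtain k where "l w = of_int k" by (auto elim: Ints_cases)
    with True show ?thesis by (simp add: Etot_def Vneg_def)
  next
    case False
    with cZ cl show ?thesis by (simp add: cyc_def Etot_def Vneg_def)
  qed
  have decomp: "l = ?Z - Etot V - ?l' - ?mult (\<lambda>w. nat (- 1 - \<lfloor>l w\<rfloor>))"
    unfolding fun_eq_iff minus_apply by (rule allI pointwise)+
  have P_l': "?P ?l'"
  proof (intro conjI exI)
    show "cyc V ?l'" by (simp add: cyc_def)
    show "?l' \<le> ?Z" using cZ cl unfolding le_fun_def cyc_def by simp
    show "\<forall>v\<in>Vneg V l. ?l' v = ?Z v" by (simp add: Vneg_def)
  qed (rule decomp)
  have unique: "y = ?l'" if "?P y" for y
  proof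
    fix w
    from that obtain m where cy: "cyc V y" and neg: "\<forall>v\<in>Vneg V l. y v = ?Z v"
      and decomp_y: "l = ?Z - Etot V - y - ?mult m" by blast
    show "y w = ?l' w"
    proof (cases "w \<in> V \<and> \<not> l w < 0")
      case True
      have "l w = ?Z w - Etot V w - y w - ?mult m w"
        using fun_cong[OF decomp_y, of w] by (simp only: minus_apply)
      moreover have "?mult m w = 0" using True by (simp add: Vneg_def)
      moreover have "Etot V w = 1" using True by (simp add: Etot_def)
      moreover have "?l' w = ?Z w - 1 - l w" using True by simp
      ultimately show ?thesis by linarith
    next
      case False
      with cy neg show ?thesis by (auto simp: cyc_def Vneg_def)
    qed
  qed
  show ?thesis unfolding assoc_cycle_def by (rule the_equality[of ?P, OF P_l' unique])
qed

lemma supp_ZK_minus_assoc_cycle: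
  assumes "l \<in> Lat V" and "cyc V (ZK V adj e)"
  shows "supp V (ZK V adj e - assoc_cycle V adj e l) = {v \<in> V. 0 \<le> l v}"
  unfolding assoc_cycle_eq[OF assms] supp_def by auto

theorem mainTheorem15:
  fixes V :: "'a set" and adj :: "'a \<Rightarrow> 'a \<Rightarrow> bool" and e :: "'a \<Rightarrow> int"
    and mm n :: nat and l :: "'a \<Rightarrow> rat"
  assumes "is_tree V adj" and "neg_definite V adj e" and "elliptic V adj e"
    and "Cseq V adj e mm = ZK V adj e"
    and "\<forall>k<mm. Cseq V adj e k \<noteq> ZK V adj e"
    and "n < mm"
    and "l \<in> SuppP0 V adj e"
    and "assoc_cycle V adj e l = Cseq V adj e n"
  shows "(\<forall>v\<in>supp V (ZK V adj e - Cseq V adj e n). 0 \<le> l v) \<and>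
         (\<forall>v\<in>V - supp V (ZK V adj e - Cseq V adj e n). l v < 0)"
proof -
  have "finite V" using assms(1) unfolding is_tree_def by blast
  hence "cyc V (ZK V adj e)" using assms(2) by (rule ZK_cyc)
  moreover have "l \<in> Lat V" using assms(7) unfolding SuppP0_def by blast
  ultimately have "supp V (ZK V adj e - assoc_cycle V adj e l) = {v \<in> V. 0 \<le> l v}"
    by (rule supp_ZK_minus_assoc_cycle[rotated])
  hence "supp V (ZK V adj e - Cseq V adj e n) = {v \<in> V. 0 \<le> l v}"
    by (simp only: assms(8))
  thus ?thesis by (simp add: not_le)
qed

end
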